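(* Let $I_H=\{1,\dots,N\}$ and $I_O=\{1,\dots,M\}$, let $\mathcal{H}$ be an $N$-dimensional Hilbert space with orthonormal basis $\{|i\rangle\}_{i\in I_H}$ and $\mathcal{K}$ an $M$-dimensional Hilbert space with orthonormal basis $\{|e_k\rangle\}_{k\in I_O}$. Fix $n$, a stochastic matrix $\Pi_n=(\Pi_{n;ij})_{i,j\in I_H}$ and an emission kernel $(Q^{(n)}_j(k))_{j\in I_H,k\in I_O}$ (nonnegative, $\sum_kQ^{(n)}_j(k)=1$). Define $V_{H;n}|i\rangle=\sum_{j}\sqrt{\Pi_{n;ij}}\,|i\rangle\otimes|j\rangle$, $V_{H,O;n}|j\rangle=\sum_{k}\sqrt{Q^{(n)}_j(k)}\,|j\rangle\otimes|e_k\rangle$, $\mathcal{E}_{H;n}(X)=V_{H;n}^*XV_{H;n}$ on $\mathcal{B}(\mathcal{H}\otimes\mathcal{H})$, $\mathcal{E}_{H,O;n}(Y)=V_{H,O;n}^*YV_{H,O;n}$ on $\mathcal{B}(\mathcal{H}\otimes\mathcal{K})$, and \[\mathcal{F}^{(n)}_{a_n,b_n}(a_{n+1})=\mathcal{E}_{H;n}\bigl(\mathcal{E}_{H,O;n}(a_n\otimes b_n)\otimes a_{n+1}\bigr),\qquad \mathcal{G}^{(n)}_{a_n,b_n}(a_{n+1})=\mathcal{E}_{H,O;n}\bigl(\mathcal{E}_{H;n}(a_n\otimes a_{n+1})\otimes b_n\bigr).\] If the observables are diagonal in the given bases, $a_n=\sum_i\alpha_i|i\rangle\langle i|$, $a_{n+1}=\sum_j\alpha'_j|j\rangle\langle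 j|$, $b_n=\sum_k\beta_k|e_k\rangle\langle e_k|$ with complex coefficients, then \[\mathcal{F}^{(n)}_{a_n,b_n}(a_{n+1})=\mathcal{G}^{(n)}_{a_n,b_n}(a_{n+1})=\sum_{i\in I_H}\alpha_i\Bigl(\sum_{k\in I_O}Q^{(n)}_i(k)\beta_k\Bigr)\Bigl(\sum_{j\in I_H}\Pi_{n;ij}\alpha'_j\Bigr)|i\rangle\langle i|.\]
   Context: A stochastic matrix has nonnegative entries with $\sum_j\Pi_{n;ij}=1$ for every $i$; the maps $V_{H;n},V_{H,O;n}$ are then isometries. $\mathcal{F}^{(n)}$ and $\mathcal{G}^{(n)}$ are the conventional (emission–then–transition) and causal (transition–then–emission) block maps of the hidden quantum Markov model obtained by entangled lifting of a classical hidden Markov model. *)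

theory Defs
  imports "HOL-Analysis.Analysis"
begin

text \<open>Operators on finite-dimensional Hilbert spaces are represented by their matrices
in the fixed orthonormal bases. The hidden space H has basis indexed by the finite
type 'h (so N = CARD('h)), the observation space K by the finite type 'o (M = CARD('o)).
The tensor-product basis of H \<otimes> K is indexed by pairs. A matrix of type
complex^'a^'b maps C^'a to C^'b; entry A$p$q is the matrix element for row p, column q.\<close>

definition kron :: "complex^'a^'b \<Rightarrow> complex^'c^'d \<Rightarrow> complex^('a \<times> 'c)^('b \<times> 'd)" where
  "kron A B = (\<chi> p q. A $ fst p $ fst q * B $ snd p $ snd q)"

definition adj :: "complex^'a^'b \<Rightarrow> complex^'b^'a" where
  "adj A = (\<chi> i j. cnj (A $ j $ i))"

definition stochastic :: "('a::finite \<Rightarrow> 'b::finite \<Rightarrow> real) \<Rightarrow> bool" where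
  "stochastic P \<longleftrightarrow> (\<forall>i j. 0 \<le> P i j) \<and> (\<forall>i. (\<Sum>j\<in>UNIV. P i j) = 1)"

definition V_H :: "('h::finite \<Rightarrow> 'h \<Rightarrow> real) \<Rightarrow> complex^'h^('h \<times> 'h)" where
  "V_H P = (\<chi> p i. if fst p = i then complex_of_real (sqrt (P i (snd p))) else 0)"

definition V_HO :: "('h::finite \<Rightarrow> 'o::finite \<Rightarrow> real) \<Rightarrow> complex^'h^('h \<times> 'o)" where
  "V_HO Q = (\<chi> p j. if fst p = j then complex_of_real (sqrt (Q j (snd p))) else 0)"

definition E_H :: "('h::finite \<Rightarrow> 'h \<Rightarrow> real) \<Rightarrow> complex^('h \<times> 'h)^('h \<times> 'h) \<Rightarrow> complex^'h^'h" where
  "E_H P X = adj (V_H P) ** X ** V_H P"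

definition E_HO :: "('h::finite \<Rightarrow> 'o::finite \<Rightarrow> real) \<Rightarrow> complex^('h \<times> 'o)^('h \<times> 'o) \<Rightarrow> complex^'h^'h" where
  "E_HO Q Y = adj (V_HO Q) ** Y ** V_HO Q"

definition F_map :: "('h::finite \<Rightarrow> 'h \<Rightarrow> real) \<Rightarrow> ('h \<Rightarrow> 'o::finite \<Rightarrow> real) \<Rightarrow>
    complex^'h^'h \<Rightarrow> complex^'o^'o \<Rightarrow> complex^'h^'h \<Rightarrow> complex^'h^'h" where
  "F_map P Q a b a' = E_H P (kron (E_HO Q (kron a b)) a')"

definition G_map :: "('h::finite \<Rightarrow> 'h \<Rightarrow> real) \<Rightarrow> ('h \<Rightarrow> 'o::finite \<Rightarrow> real) \<Rightarrow>
    complex^'h^'h \<Rightarrow> complex^'o^'o \<Rightarrow> complex^'h^'h \<Rightarrow> complex^'h^'h" where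
  "G_map P Q a b a' = E_HO Q (kron (E_H P (kron a a')) b)"

definition ketbra :: "'a::finite \<Rightarrow> complex^'a^'a" where
  "ketbra i = (\<chi> p q. if p = i \<and> q = i then 1 else 0)"

definition diag_op :: "('a::finite \<Rightarrow> complex) \<Rightarrow> complex^'a^'a" where
  "diag_op c = (\<chi> p q. \<Sum>i\<in>UNIV. c i * ketbra i $ p $ q)"

end

theory Submission
  imports Defs
begin

text \<open>Each lifting isometry V has the block form V|i> = |i> \<otimes> (sum_k sqrt(K i k) |k>),
  so the sandwich V* D V of a diagonal D is again diagonal, with entries the K-averages
  sum_k K i k D(i,k). Hence both block maps reduce to diagonal operators with entry
  \<alpha> i (sum_k Q i k \<beta> k)(sum_j P i j \<alpha>' j), the two orders of emission and transition
  only differing in the order of a double sum.\<close>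

lemma diag_op_nth: "diag_op c $ p $ q = (if p = q then c p else 0)"
proof (cases "p = q")
  case True
  then show ?thesis
    unfolding diag_op_def ketbra_def by (simp add: if_distrib[of "\<lambda>x. _ * x"] cong: if_cong)
next
  case False
  then show ?thesis
    unfolding diag_op_def ketbra_def by (auto intro: sum.neutral)
qed

lemma kron_diag_op: "kron (diag_op a) (diag_op b) = diag_op (\<lambda>p. a (fst p) * b (snd p))"
  by (auto simp: kron_def diag_op_nth vec_eq_iff prod_eq_iff)

lemma sandwich_diag_op_nth:
  fixes V :: "complex^'a::finite^'b::finite"
  shows "(adj V ** diag_op d ** V) $ i $ i' = (\<Sum>p\<in>UNIV. cnj (V $ p $ i) * d p * V $ p $ i')"
proof -
  have "(adj V ** diag_op d ** V) $ i $ i'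
      = (\<Sum>q\<in>UNIV. (\<Sum>p\<in>UNIV. cnj (V $ p $ i) * (if p = q then d p else 0)) * V $ q $ i')"
    by (simp add: matrix_matrix_mult_def adj_def diag_op_nth)
  also have "\<dots> = (\<Sum>q\<in>UNIV. cnj (V $ q $ i) * d q * V $ q $ i')"
    by (simp add: if_distrib[of "\<lambda>x. _ * x"] cong: if_cong)
  finally show ?thesis .
qed

lemma E_HO_diag_op:
  fixes Q :: "'h::finite \<Rightarrow> 'o::finite \<Rightarrow> real"
  assumes "\<And>i k. 0 \<le> Q i k"
  shows "E_HO Q (diag_op d) = diag_op (\<lambda>i. \<Sum>k\<in>UNIV. complex_of_real (Q i k) * d (i, k))"
proof -
  have sqrt_sandwich: "cnj (complex_of_real (sqrt (Q i k))) * x * complex_of_real (sqrt (Q i k))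
      = complex_of_real (Q i k) * x" for i k x
    using assms[of i k] by (simp add: algebra_simps flip: of_real_mult)
  have "cnj (V_HO Q $ (a, k) $ i) * d (a, k) * V_HO Q $ (a, k) $ i'
      = (if a = i then (if i = i' then complex_of_real (Q i k) * d (i, k) else 0) else 0)"
    for a k i i'
    unfolding V_HO_def using sqrt_sandwich[of i k "d (i, k)"] by auto
  moreover have "(\<Sum>k\<in>A. if c then f k else 0) = (if c then sum f A else 0)"
    for c and f :: "'o \<Rightarrow> complex" and A
    by simp
  ultimately have "E_HO Q (diag_op d) $ i $ i'
      = (if i = i' then \<Sum>k\<in>UNIV. complex_of_real (Q i k) * d (i, k) else 0)" for i i'
    unfolding E_HO_def sandwich_diag_op_nth
      sum.cartesian_product'[of _ UNIV UNIV, unfolded UNIV_Times_UNIV]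
    by (simp add: sum.delta cong: if_cong)
  then show ?thesis
    by (simp add: vec_eq_iff diag_op_nth)
qed

lemma E_H_eq_E_HO: "E_H P = E_HO P"
  by (simp add: E_H_def E_HO_def V_H_def V_HO_def fun_eq_iff)

theorem mainTheorem4:
  fixes P :: "'h::finite \<Rightarrow> 'h \<Rightarrow> real"
    and Q :: "'h \<Rightarrow> 'o::finite \<Rightarrow> real"
    and \<alpha> \<alpha>' :: "'h \<Rightarrow> complex" and \<beta> :: "'o \<Rightarrow> complex"
  assumes "stochastic P" and "stochastic Q"
  shows "F_map P Q (diag_op \<alpha>) (diag_op \<beta>) (diag_op \<alpha>')
           = diag_op (\<lambda>i. \<alpha> i * (\<Sum>k\<in>UNIV. complex_of_real (Q i k) * \<beta> k)
                              * (\<Sum>j\<in>UNIV. complex_of_real (P i j) * \<alpha>' j))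
       \<and> G_map P Q (diag_op \<alpha>) (diag_op \<beta>) (diag_op \<alpha>')
           = diag_op (\<lambda>i. \<alpha> i * (\<Sum>k\<in>UNIV. complex_of_real (Q i k) * \<beta> k)
                              * (\<Sum>j\<in>UNIV. complex_of_real (P i j) * \<alpha>' j))"
proof -
  have E_H: "E_H P (diag_op d) = diag_op (\<lambda>i. \<Sum>j\<in>UNIV. complex_of_real (P i j) * d (i, j))"
    and E_HO: "E_HO Q (diag_op e) = diag_op (\<lambda>i. \<Sum>k\<in>UNIV. complex_of_real (Q i k) * e (i, k))"
    for d e
    using assms E_HO_diag_op unfolding stochastic_def E_H_eq_E_HO by blast+
  show ?thesis
    unfolding F_map_def G_map_def
    by (simp add: kron_diag_op E_H E_HO sum_distrib_left sum_distrib_right algebra_simps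
        sum.swap[of _ "UNIV :: 'h set" "UNIV :: 'o set"])
qed

end
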